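(* Fix integers $T\ge 1$ and $1\le T_n\le T$, a number $\bar\epsilon_n>0$, and rates $q_n>0$, $q>0$. Define $\epsilon_n^1,\dots,\epsilon_n^T$ recursively by $$\epsilon_n^t=\begin{cases}\dfrac{\bar\epsilon_n-\sum_{\tau=1}^{t-1}\epsilon_n^\tau}{T-t+1}\left(\dfrac{q_n}{q}\right)^2, & t<T_n,\\[2ex] \dfrac{\bar\epsilon_n-\sum_{\tau=1}^{t-1}\epsilon_n^\tau}{T-t+1}, & t\ge T_n.\end{cases}$$ Then for $1\le t<T_n$, $$\epsilon_n^t=\frac{\bar\epsilon_n}{T-t+1}\left(\frac{q_n}{q}\right)^2\prod_{i=1}^{t-1}\left(1-\frac{1}{T-t+1+i}\left(\frac{q_n}{q}\right)^2\right),$$ and for $T_n\le t\le T$, $$\epsilon_n^t=\frac{\bar\epsilon_n}{T-T_n+1}\prod_{i=1}^{T_n-1}\left(1-\frac{1}{T-T_n+1+i}\left(\frac{q_n}{q}\right)^2\right).$$ (Empty products equal $1$.)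
   Context: In the paper's time-adaptive differentially private federated learning scheme, $\bar\epsilon_n$ is the total Rényi-DP privacy budget of client $n$, $T$ is the number of training rounds, $T_n$ is the round at which client $n$ transitions from a "saving" mode (sampling rate $q_n$) to a "spending" mode (sampling rate $q$), and $\epsilon_n^t$ is the Rényi-DP privacy spent by client $n$ in round $t$. *)

theory Defs
  imports Complex_Main
begin

end

theory Submission
  imports Defs
begin

text \<open>
  Let \<open>R t\<close> be the budget left before round \<open>t\<close>. In the saving phase a client spends the
  fraction \<open>r / (T - t + 1)\<close> of \<open>R t\<close>, with \<open>r = (q\<^sub>n / q)\<^sup>2\<close>, so \<open>R t\<close> is the total budget times
  a product of the factors \<open>1 - r / (T - j + 1)\<close>; reversing the index gives the stated product.
  In the spending phase the remainder is split evenly over the remaining rounds, and an even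
  split stays even: the spend is constant from round \<open>T\<^sub>n\<close> on.
\<close>

definition budget_left :: "real \<Rightarrow> (nat \<Rightarrow> real) \<Rightarrow> nat \<Rightarrow> real" where
  "budget_left B e t = B - (\<Sum>\<tau>=1..<t. e \<tau>)"

lemma budget_left_Suc: "1 \<le> t \<Longrightarrow> budget_left B e (Suc t) = budget_left B e t - e t"
  by (simp add: budget_left_def)

lemma budget_left_eq_prod:
  assumes spend: "\<And>t. 1 \<le> t \<Longrightarrow> t < n \<Longrightarrow> e t = budget_left B e t * c t"
    and "1 \<le> m" "m \<le> n"
  shows "budget_left B e m = B * (\<Prod>j=1..<m. 1 - c j)"
  using assms(2,3)
proof (induction m rule: dec_induct)
  case base
  show ?case by (simp add: budget_left_def)
next
  case (step t)
  have "budget_left B e (Suc t) = budget_left B e t * (1 - c t)"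
    using step.hyps step.prems spend[of t] by (simp add: budget_left_Suc algebra_simps)
  with step show ?case
    by (simp add: prod.atLeastLessThan_Suc)
qed

lemma even_split_spend_constant:
  fixes T n :: nat
  assumes spend: "\<And>t. n \<le> t \<Longrightarrow> t \<le> T \<Longrightarrow> e t = budget_left B e t / real (T - t + 1)"
    and "1 \<le> n" "n \<le> m" "m \<le> T"
  shows "e m = e n"
  using assms(3,4)
proof (induction m rule: dec_induct)
  case base
  show ?case by simp
next
  case (step t)
  define k where "k = real (T - Suc t + 1)"
  have t: "1 \<le> t" "t < T" and k: "real (T - t + 1) = k + 1" "k > 0"
    using step.hyps step.prems \<open>1 \<le> n\<close> by (auto simp: k_def of_nat_diff)
  have "e (Suc t) = (budget_left B e t - budget_left B e t / (k + 1)) / k"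
    using spend[of "Suc t"] spend[of t] step.hyps t k by (simp add: budget_left_Suc k_def)
  also have "\<dots> = budget_left B e t * k / (k + 1) / k"
    using k by (simp add: field_simps)
  also have "\<dots> = budget_left B e t / (k + 1)"
    using k by simp
  also have "\<dots> = e t"
    using spend[of t] step.hyps t k by simp
  finally show ?case
    using step.IH t by simp
qed

theorem mainTheorem1:
  fixes T Tn :: nat and epsbar qn q :: real and e :: "nat \<Rightarrow> real"
  assumes "T \<ge> 1" and "1 \<le> Tn" and "Tn \<le> T"
    and "epsbar > 0" and "qn > 0" and "q > 0"
    and rec: "\<forall>t\<in>{1..T}. e t =
      (if t < Tn
       then (epsbar - (\<Sum>\<tau>=1..<t. e \<tau>)) / real (T - t + 1) * (qn / q)^2
       else (epsbar - (\<Sum>\<tau>=1..<t. e \<tau>)) / real (T - t + 1))"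
  shows "(\<forall>t. 1 \<le> t \<and> t < Tn \<longrightarrow>
            e t = epsbar / real (T - t + 1) * (qn / q)^2 *
                  (\<Prod>i=1..<t. 1 - 1 / real (T - t + 1 + i) * (qn / q)^2))
       \<and> (\<forall>t. Tn \<le> t \<and> t \<le> T \<longrightarrow>
            e t = epsbar / real (T - Tn + 1) *
                  (\<Prod>i=1..<Tn. 1 - 1 / real (T - Tn + 1 + i) * (qn / q)^2))"
proof -
  define r where "r = (qn / q)^2"
  have saving: "e t = budget_left epsbar e t * (1 / real (T - t + 1) * r)"
    if "1 \<le> t" "t < Tn" for t
    using rec that \<open>Tn \<le> T\<close> by (simp add: budget_left_def r_def)
  have spending: "e t = budget_left epsbar e t / real (T - t + 1)" if "Tn \<le> t" "t \<le> T" for t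
    using rec that \<open>1 \<le> Tn\<close> by (simp add: budget_left_def)
  have left: "budget_left epsbar e t = epsbar * (\<Prod>i=1..<t. 1 - 1 / real (T - t + 1 + i) * r)"
    if "1 \<le> t" "t \<le> Tn" for t
  proof -
    have "budget_left epsbar e t = epsbar * (\<Prod>j=1..<t. 1 - 1 / real (T - j + 1) * r)"
      using budget_left_eq_prod[OF saving] that by blast
    also have "(\<Prod>j=1..<t. 1 - 1 / real (T - j + 1) * r)
        = (\<Prod>i=1..<t. 1 - 1 / real (T - t + 1 + i) * r)"
      using that \<open>Tn \<le> T\<close>
      by (subst prod.atLeastLessThan_rev) (intro prod.cong; simp)
    finally show ?thesis .
  qed
  have "e t = epsbar / real (T - Tn + 1) * (\<Prod>i=1..<Tn. 1 - 1 / real (T - Tn + 1 + i) * r)"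
    if "Tn \<le> t" "t \<le> T" for t
    using even_split_spend_constant[OF spending \<open>1 \<le> Tn\<close> that] spending[of Tn] left[of Tn]
      \<open>1 \<le> Tn\<close> \<open>Tn \<le> T\<close> by simp
  with saving left show ?thesis
    unfolding r_def[symmetric] by auto
qed

end
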